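(* Let $0<\alpha<1$, $\lambda>0$, and let $\{M_{\alpha,\lambda}(t)\}_{t\ge0}$ be a Lévy process whose marginals have Laplace transform $\mathbb{E}\, e^{-uM_{\alpha,\lambda}(t)}=\left(\frac{\lambda}{\lambda+u^{\alpha}}\right)^{t}$ for $u\ge 0$. Then for $t>0$ and $0<q<\alpha$, $$\mathbb{E}\big(M_{\alpha,\lambda}(t)^q\big)=\frac{t}{\lambda^{q/\alpha}\,\Gamma(1-q)}\,B\!\left(1-\frac{q}{\alpha},\,t+\frac{q}{\alpha}\right),$$ where $B$ is the Beta function. *)

theory Defs
  imports "HOL-Probability.Probability"
begin

definition levy_process :: "'a measure \<Rightarrow> (real \<Rightarrow> 'a \<Rightarrow> real) \<Rightarrow> bool" where
  "levy_process M X \<longleftrightarrow>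
     prob_space M \<and>
     (\<forall>t\<ge>0. X t \<in> borel_measurable M) \<and>
     (AE \<omega> in M. X 0 \<omega> = 0) \<and>
     (\<forall>n::nat. \<forall>ts::nat \<Rightarrow> real. 0 \<le> ts 0 \<and> strict_mono_on {..n} ts \<longrightarrow>
        prob_space.indep_vars M (\<lambda>_. borel) (\<lambda>i \<omega>. X (ts (Suc i)) \<omega> - X (ts i) \<omega>) {..<n}) \<and>
     (\<forall>s\<ge>0. \<forall>t\<ge>0. distr M borel (\<lambda>\<omega>. X (s + t) \<omega> - X s \<omega>) = distr M borel (X t)) \<and>
     (\<forall>t\<ge>0. \<forall>\<epsilon>>0.
        ((\<lambda>s. measure M {\<omega> \<in> space M. \<bar>X s \<omega> - X t \<omega>\<bar> > \<epsilon>}) \<longlongrightarrow> 0)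
          (at t within {0..})) \<and>
     (AE \<omega> in M. \<forall>t\<ge>0. continuous (at_right t) (\<lambda>s. X s \<omega>) \<and>
                          (t > 0 \<longrightarrow> (\<exists>l. ((\<lambda>s. X s \<omega>) \<longlongrightarrow> l) (at_left t))))"

end

theory Submission
  imports Defs
begin

text \<open>For \<open>Y \<ge> 0\<close> and \<open>0 < q < 1\<close> one has
  \<open>Y^q = q / \<Gamma>(1-q) \<cdot> \<integral>\<^sub>0\<^sup>\<infinity> u^(-q-1) (1 - exp(-u Y)) du\<close>, so by Tonelli the
  fractional moment \<open>E Y^q\<close> is the same integral with \<open>exp(-u Y)\<close> replaced by the
  Laplace transform of \<open>Y\<close>. For the transform \<open>(\<lambda>/(\<lambda>+u^\<alpha>))^t = (1+v)^(-t)\<close>,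
  \<open>v = u^\<alpha>/\<lambda>\<close>, write \<open>\<Gamma>(t) (1 - (1+v)^(-t)) = \<integral>\<^sub>0\<^sup>\<infinity> s^(t-1) exp(-s) (1 - exp(-v s)) ds\<close>
  and swap the integrals once more: the inner \<open>u\<close>-integral is of the first kind (after
  \<open>u \<mapsto> u^\<alpha>\<close>) and equals \<open>(s/\<lambda>)^(q/\<alpha>) \<Gamma>(1-q/\<alpha>) / q\<close>, and the outer \<open>s\<close>-integral then
  produces \<open>\<Gamma>(t+q/\<alpha>)\<close>. Nonnegativity of the marginals is not assumed; it follows from
  \<open>E exp(-u Y) \<le> 1\<close> for all \<open>u \<ge> 0\<close>.\<close>

lemma nn_integral_powr_exp_eq_Gamma:
  fixes a c :: real
  assumes a: "0 < a" and c: "0 < c"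
  shows "(\<integral>\<^sup>+y. ennreal (if 0 < y then y powr (a-1) * exp (-(c*y)) else 0) \<partial>lborel)
         = ennreal (Gamma a * c powr (-a))"
proof -
  define I where "I = (\<integral>\<^sup>+y. ennreal (if 0 < y then y powr (a-1) * exp (-(c*y)) else 0) \<partial>lborel)"
  have "ennreal (Gamma a) = (\<integral>\<^sup>+s. ennreal (if 0 < s then s powr (a-1) * exp (-s) else 0) \<partial>lborel)"
    using Gamma_conv_nn_integral_real[OF a]
    by (auto intro!: nn_integral_cong simp: indicator_def exp_minus field_simps)
  also have "\<dots> = ennreal c *
      (\<integral>\<^sup>+y. ennreal (if 0 < c*y then (c*y) powr (a-1) * exp (-(c*y)) else 0) \<partial>lborel)"
    using c nn_integral_real_affine[where c=c and t=0
        and f="\<lambda>s. ennreal (if 0 < s then s powr (a-1) * exp (-s) else 0)"]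
    unfolding add_0_left by simp
  also have "(\<integral>\<^sup>+y. ennreal (if 0 < c*y then (c*y) powr (a-1) * exp (-(c*y)) else 0) \<partial>lborel)
      = (\<integral>\<^sup>+y. ennreal (c powr (a-1)) *
          ennreal (if 0 < y then y powr (a-1) * exp (-(c*y)) else 0) \<partial>lborel)"
    using c by (intro nn_integral_cong) (auto simp: powr_mult zero_less_mult_iff ennreal_mult''[symmetric])
  also have "\<dots> = ennreal (c powr (a-1)) * I"
    unfolding I_def by (rule nn_integral_cmult) measurable
  finally have "ennreal (Gamma a) = ennreal (c * c powr (a-1)) * I"
    using c by (simp add: ennreal_mult mult.assoc)
  also have "c * c powr (a-1) = c powr a" using c by (simp add: powr_diff)
  finally have "ennreal (c powr (-a)) * ennreal (Gamma a) = I"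
    using c by (simp add: mult.assoc[symmetric] ennreal_mult[symmetric] powr_minus)
  then show ?thesis using a c by (simp add: I_def ennreal_mult mult.commute)
qed

lemma nn_integral_powr_Ioc:
  fixes b x :: real
  assumes b: "0 < b" and x: "0 \<le> x"
  shows "(\<integral>\<^sup>+y. ennreal (if 0 < y \<and> y \<le> x then y powr (b-1) else 0) \<partial>lborel)
         = ennreal (x powr b / b)"
proof -
  have "((\<lambda>y. y powr (b-1)) has_integral (x powr (b-1+1) / (b-1+1))) {0..x}"
    using b x by (intro has_integral_powr_from_0) auto
  then have "(\<integral>\<^sup>+y. ennreal (indicator {0..x} y * y powr (b-1)) \<partial>lborel) = ennreal (x powr b / b)"
    by (subst nn_integral_has_integral_lebesgue) auto
  moreover have "(\<integral>\<^sup>+y. ennreal (indicator {0..x} y * y powr (b-1)) \<partial>lborel)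
      = (\<integral>\<^sup>+y. ennreal (if 0 < y \<and> y \<le> x then y powr (b-1) else 0) \<partial>lborel)"
    by (intro nn_integral_cong) (auto simp: indicator_def)
  ultimately show ?thesis by simp
qed

lemma nn_integral_powr_Ici:
  fixes b x :: real
  assumes b: "0 < b" and x: "0 < x"
  shows "(\<integral>\<^sup>+u. ennreal (if x \<le> u then u powr (-b-1) else 0) \<partial>lborel)
         = ennreal (x powr (-b) / b)"
proof -
  have "((\<lambda>y. y powr (-b-1)) has_integral (-(x powr (-b-1+1)) / (-b-1+1))) {x..}"
    using b x by (intro has_integral_powr_to_inf) auto
  then have "(\<integral>\<^sup>+y. ennreal (indicator {x..} y * y powr (-b-1)) \<partial>lborel) = ennreal (x powr (-b) / b)"
    by (subst nn_integral_has_integral_lebesgue) auto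
  moreover have "(\<integral>\<^sup>+y. ennreal (indicator {x..} y * y powr (-b-1)) \<partial>lborel)
      = (\<integral>\<^sup>+y. ennreal (if x \<le> y then y powr (-b-1) else 0) \<partial>lborel)"
    by (intro nn_integral_cong) (auto simp: indicator_def)
  ultimately show ?thesis by simp
qed

lemma nn_integral_exp_Ioc:
  fixes u x :: real
  assumes u: "0 \<le> u" and x: "0 \<le> x"
  shows "(\<integral>\<^sup>+y. ennreal (if 0 < y \<and> y \<le> x then u * exp (-(u*y)) else 0) \<partial>lborel)
         = ennreal (1 - exp (-(u*x)))"
proof -
  have "((\<lambda>y. u * exp (-(u*y))) has_integral ((- exp (-(u*x))) - (- exp (-(u*0))))) {0..x}"
    using x by (intro fundamental_theorem_of_calculus)
       (auto intro!: derivative_eq_intros simp flip: has_real_derivative_iff_has_vector_derivative)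
  then have "(\<integral>\<^sup>+y. ennreal (indicator {0..x} y * (u * exp (-(u*y)))) \<partial>lborel) = ennreal (1 - exp (-(u*x)))"
    using u by (subst nn_integral_has_integral_lebesgue) auto
  moreover have "(\<integral>\<^sup>+y. ennreal (indicator {0..x} y * (u * exp (-(u*y)))) \<partial>lborel)
      = (\<integral>\<^sup>+y. ennreal (if 0 < y \<and> y \<le> x then u * exp (-(u*y)) else 0) \<partial>lborel)"
    by (intro nn_integral_cong_AE, rule AE_mp[OF AE_lborel_singleton[of 0]]) (auto simp: indicator_def)
  ultimately show ?thesis by simp
qed

lemma nn_integral_powr_one_minus_exp:
  fixes q x :: real
  assumes q: "0 < q" "q < 1" and x: "0 \<le> x"
  shows "(\<integral>\<^sup>+u. ennreal (if 0 < u then u powr (-q-1) * (1 - exp (- u * x)) else 0) \<partial>lborel)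
         = ennreal (Gamma (1-q) * x powr q / q)"
proof -
  \<comment> \<open>\<open>1 - exp(-u x) = \<integral>\<^sub>0\<^sup>x u exp(-u y) dy\<close>; integrating in \<open>u\<close> first leaves
    a Gamma integral.\<close>
  define k where "k u y = ennreal (if 0 < u \<and> 0 < y \<and> y \<le> x then u powr (-q) * exp (-(y*u)) else 0)"
    for u y :: real
  have [measurable]: "case_prod k \<in> borel_measurable (lborel \<Otimes>\<^sub>M lborel)"
    unfolding k_def by measurable
  have "ennreal (if 0 < u then u powr (-q-1) * (1 - exp (- u * x)) else 0) = (\<integral>\<^sup>+y. k u y \<partial>lborel)"
    for u
  proof (cases "0 < u")
    case True
    have "(\<integral>\<^sup>+y. k u y \<partial>lborel) = (\<integral>\<^sup>+y. ennreal (u powr (-q-1)) *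
        ennreal (if 0 < y \<and> y \<le> x then u * exp (-(u*y)) else 0) \<partial>lborel)"
      using True by (intro nn_integral_cong) (simp add: k_def ennreal_mult'' [symmetric] powr_diff mult.commute)
    also have "\<dots> = ennreal (u powr (-q-1)) * ennreal (1 - exp (-(u*x)))"
      using True x by (simp add: nn_integral_cmult nn_integral_exp_Ioc)
    finally show ?thesis using True by (simp add: ennreal_mult')
  qed (simp add: k_def)
  then have "(\<integral>\<^sup>+u. ennreal (if 0 < u then u powr (-q-1) * (1 - exp (- u * x)) else 0) \<partial>lborel)
      = (\<integral>\<^sup>+u. \<integral>\<^sup>+y. k u y \<partial>lborel \<partial>lborel)"
    by simp
  also have "\<dots> = (\<integral>\<^sup>+y. \<integral>\<^sup>+u. k u y \<partial>lborel \<partial>lborel)"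
    by (rule lborel_pair.Fubini'[symmetric]) measurable
  also have "\<dots> = (\<integral>\<^sup>+y. ennreal (Gamma (1-q)) *
      ennreal (if 0 < y \<and> y \<le> x then y powr (q-1) else 0) \<partial>lborel)"
  proof (intro nn_integral_cong)
    fix y :: real
    show "(\<integral>\<^sup>+u. k u y \<partial>lborel) =
        ennreal (Gamma (1-q)) * ennreal (if 0 < y \<and> y \<le> x then y powr (q-1) else 0)"
    proof (cases "0 < y \<and> y \<le> x")
      case True
      have exponents: "1 - q - 1 = -q" "-(1 - q) = q - 1" by simp_all
      have "(\<integral>\<^sup>+u. k u y \<partial>lborel) = ennreal (Gamma (1-q) * y powr (q - 1))"
        using True q nn_integral_powr_exp_eq_Gamma[of "1-q" y, unfolded exponents] by (simp add: k_def)
      then show ?thesis using True q by (simp add: ennreal_mult)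
    next
      case False
      then have "k u y = 0" for u by (auto simp: k_def)
      with False show ?thesis by auto
    qed
  qed
  also have "\<dots> = ennreal (Gamma (1-q)) * ennreal (x powr q / q)"
    using q x by (simp add: nn_integral_cmult nn_integral_powr_Ioc)
  finally show ?thesis
    using q Gamma_real_pos[of "1-q"] by (simp add: ennreal_mult'[symmetric])
qed

lemma nn_integral_Gamma_one_minus_exp:
  fixes t c :: real
  assumes t: "0 < t" and c: "0 \<le> c"
  shows "(\<integral>\<^sup>+s. ennreal (if 0 < s then s powr (t-1) * exp (-s) * (1 - exp (-(c * s))) else 0) \<partial>lborel)
         = ennreal (Gamma t * (1 - (1+c) powr (-t)))"
proof -
  define g where "g s = (if 0 < s then s powr (t-1) * exp (-s) * (1 - exp (-(c * s))) else 0)" for s :: real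
  have "ennreal (if 0 < s then s powr (t-1) * exp (-(1 * s)) else 0) =
      ennreal (if 0 < s then s powr (t-1) * exp (-((1+c) * s)) else 0) + ennreal (g s)" for s
  proof (cases "0 < s")
    case True
    then have "0 \<le> g s" using c by (simp add: g_def)
    moreover have "s powr (t-1) * exp (-(1 * s)) = s powr (t-1) * exp (-((1+c) * s)) + g s"
      using True by (simp add: g_def algebra_simps exp_add[symmetric])
    ultimately show ?thesis using True by (simp flip: ennreal_plus)
  qed (simp add: g_def)
  then have "ennreal (Gamma t * 1 powr (-t)) = (\<integral>\<^sup>+s. ennreal (if 0 < s then s powr (t-1) * exp (-((1+c) * s)) else 0)
      + ennreal (g s) \<partial>lborel)"
    using nn_integral_powr_exp_eq_Gamma[OF t, of 1] by simp
  also have "\<dots> = ennreal (Gamma t * (1+c) powr (-t)) + (\<integral>\<^sup>+s. ennreal (g s) \<partial>lborel)"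
    using c by (subst nn_integral_add) (auto simp: g_def nn_integral_powr_exp_eq_Gamma[OF t])
  finally have "(\<integral>\<^sup>+s. ennreal (g s) \<partial>lborel) = ennreal (Gamma t) - ennreal (Gamma t * (1+c) powr (-t))"
    by simp
  also have "\<dots> = ennreal (Gamma t * (1 - (1+c) powr (-t)))"
    using t c by (subst ennreal_minus) (auto simp: less_imp_le algebra_simps)
  finally show ?thesis by (simp add: g_def)
qed

lemma powr_inverse_le_iff:
  fixes y u a :: real
  assumes "0 < y" "0 < u" "0 < a"
  shows "y powr (1/a) \<le> u \<longleftrightarrow> y \<le> u powr a"
proof
  assume "y powr (1/a) \<le> u"
  then have "(y powr (1/a)) powr a \<le> u powr a" using assms by (intro powr_mono2) auto
  then show "y \<le> u powr a" using assms by (simp add: powr_powr)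
next
  assume "y \<le> u powr a"
  then have "y powr (1/a) \<le> (u powr a) powr (1/a)" using assms by (intro powr_mono2) auto
  then show "y powr (1/a) \<le> u" using assms by (simp add: powr_powr)
qed

lemma nn_integral_powr_one_minus_exp_powr:
  fixes c q \<alpha> :: real
  assumes c: "0 < c" and q: "0 < q" "q < \<alpha>"
  shows "(\<integral>\<^sup>+u. ennreal (if 0 < u then u powr (-q-1) * (1 - exp (-(c * u powr \<alpha>))) else 0) \<partial>lborel)
         = ennreal (c powr (q/\<alpha>) * Gamma (1 - q/\<alpha>) / q)"
proof -
  have \<alpha>: "0 < \<alpha>" using q by simp
  \<comment> \<open>\<open>1 - exp(-c u^\<alpha>) = \<integral> c exp(-c y) dy\<close> over \<open>0 < y \<le> u^\<alpha>\<close>; for fixed \<open>y\<close> the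
    \<open>u\<close>-range becomes \<open>u \<ge> y^(1/\<alpha>)\<close>.\<close>
  define k where "k u y = ennreal (if 0 < y \<and> y powr (1/\<alpha>) \<le> u then c * exp (-(c*y)) * u powr (-q-1) else 0)"
    for u y :: real
  have [measurable]: "case_prod k \<in> borel_measurable (lborel \<Otimes>\<^sub>M lborel)"
    unfolding k_def by measurable
  have "ennreal (if 0 < u then u powr (-q-1) * (1 - exp (-(c * u powr \<alpha>))) else 0) = (\<integral>\<^sup>+y. k u y \<partial>lborel)"
    for u
  proof (cases "0 < u")
    case True
    have "(\<integral>\<^sup>+y. k u y \<partial>lborel) = (\<integral>\<^sup>+y. ennreal (u powr (-q-1)) *
        ennreal (if 0 < y \<and> y \<le> u powr \<alpha> then c * exp (-(c*y)) else 0) \<partial>lborel)"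
      using True \<alpha> c by (intro nn_integral_cong) (auto simp: k_def powr_inverse_le_iff ennreal_mult'[symmetric])
    also have "\<dots> = ennreal (u powr (-q-1)) * ennreal (1 - exp (-(c * u powr \<alpha>)))"
      using c by (simp add: nn_integral_cmult nn_integral_exp_Ioc)
    finally show ?thesis using True by (simp add: ennreal_mult')
  next
    case False
    have "\<not> y powr (1/\<alpha>) \<le> u" if "0 < y" for y
      using False that powr_gt_zero[of y "1/\<alpha>"] by linarith
    then have "k u y = 0" for y by (auto simp: k_def)
    then show ?thesis using False by simp
  qed
  then have "(\<integral>\<^sup>+u. ennreal (if 0 < u then u powr (-q-1) * (1 - exp (-(c * u powr \<alpha>))) else 0) \<partial>lborel)
      = (\<integral>\<^sup>+u. \<integral>\<^sup>+y. k u y \<partial>lborel \<partial>lborel)"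
    by simp
  also have "\<dots> = (\<integral>\<^sup>+y. \<integral>\<^sup>+u. k u y \<partial>lborel \<partial>lborel)"
    by (rule lborel_pair.Fubini'[symmetric]) measurable
  also have "\<dots> = (\<integral>\<^sup>+y. ennreal (c / q) *
      ennreal (if 0 < y then y powr ((1 - q/\<alpha>) - 1) * exp (-(c*y)) else 0) \<partial>lborel)"
  proof (intro nn_integral_cong)
    fix y :: real
    show "(\<integral>\<^sup>+u. k u y \<partial>lborel) =
        ennreal (c / q) * ennreal (if 0 < y then y powr ((1 - q/\<alpha>) - 1) * exp (-(c*y)) else 0)"
    proof (cases "0 < y")
      case True
      have "(\<integral>\<^sup>+u. k u y \<partial>lborel) = (\<integral>\<^sup>+u. ennreal (c * exp (-(c*y))) *
          ennreal (if y powr (1/\<alpha>) \<le> u then u powr (-q-1) else 0) \<partial>lborel)"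
        using True c by (intro nn_integral_cong) (simp add: k_def ennreal_mult'[symmetric])
      also have "\<dots> = ennreal (c * exp (-(c*y))) * ennreal ((y powr (1/\<alpha>)) powr (-q) / q)"
        using True q by (simp add: nn_integral_cmult nn_integral_powr_Ici)
      also have "(y powr (1/\<alpha>)) powr (-q) = y powr ((1 - q/\<alpha>) - 1)"
        using True by (simp add: powr_powr)
      finally show ?thesis using True c q by (simp add: ennreal_mult'[symmetric] ennreal_mult[symmetric])
    qed (simp add: k_def)
  qed
  also have "\<dots> = ennreal (c / q) * ennreal (Gamma (1 - q/\<alpha>) * c powr (-(1 - q/\<alpha>)))"
    using q \<alpha> c by (subst nn_integral_cmult) (auto simp: nn_integral_powr_exp_eq_Gamma field_simps)
  also have "\<dots> = ennreal (c powr (q/\<alpha>) * Gamma (1 - q/\<alpha>) / q)"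
  proof -
    have "c / q * (Gamma (1 - q/\<alpha>) * c powr (-(1 - q/\<alpha>))) = c powr (q/\<alpha>) * Gamma (1 - q/\<alpha>) / q"
      using c by (simp add: powr_minus_divide powr_diff field_simps)
    then show ?thesis using c q by (simp add: ennreal_mult[symmetric])
  qed
  finally show ?thesis .
qed

lemma nn_integral_powr_one_minus_ratio_powr:
  fixes lam t q \<alpha> :: real
  assumes lam: "0 < lam" and t: "0 < t" and q: "0 < q" "q < \<alpha>"
  shows "(\<integral>\<^sup>+u. ennreal (if 0 < u then u powr (-q-1) * (1 - (lam / (lam + u powr \<alpha>)) powr t)
           else 0) \<partial>lborel)
         = ennreal (t * Beta (1 - q/\<alpha>) (t + q/\<alpha>) / (q * lam powr (q/\<alpha>)))"
proof -
  define p where "p = q / \<alpha>"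
  have p: "0 < p" "p < 1" using q by (auto simp: p_def)
  have \<Gamma>t: "0 < Gamma t" using t by (rule Gamma_real_pos)
  define k where "k u s = ennreal (if 0 < u \<and> 0 < s then u powr (-q-1) / Gamma t *
      (s powr (t-1) * exp (-s) * (1 - exp (-(s / lam * u powr \<alpha>)))) else 0)" for u s :: real
  have [measurable]: "case_prod k \<in> borel_measurable (lborel \<Otimes>\<^sub>M lborel)"
    unfolding k_def by measurable
  have "ennreal (if 0 < u then u powr (-q-1) * (1 - (lam / (lam + u powr \<alpha>)) powr t) else 0)
      = (\<integral>\<^sup>+s. k u s \<partial>lborel)" for u
  proof (cases "0 < u")
    case True
    have "(\<integral>\<^sup>+s. k u s \<partial>lborel) = (\<integral>\<^sup>+s. ennreal (u powr (-q-1) / Gamma t) *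
        ennreal (if 0 < s then s powr (t-1) * exp (-s) * (1 - exp (-(u powr \<alpha> / lam * s))) else 0) \<partial>lborel)"
      using True \<Gamma>t by (intro nn_integral_cong) (simp add: k_def ennreal_mult'[symmetric] mult.commute)
    also have "\<dots> = ennreal (u powr (-q-1) / Gamma t) * ennreal (Gamma t * (1 - (1 + u powr \<alpha> / lam) powr (-t)))"
      using t lam by (simp add: nn_integral_cmult nn_integral_Gamma_one_minus_exp)
    moreover have "lam / (lam + u powr \<alpha>) = 1 / (1 + u powr \<alpha> / lam)"
      using lam by (simp add: field_simps)
    then have "(1 + u powr \<alpha> / lam) powr (-t) = (lam / (lam + u powr \<alpha>)) powr t"
      using lam by (simp add: powr_divide powr_minus_divide)
    ultimately show ?thesis using True \<Gamma>t by (simp add: ennreal_mult'[symmetric])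
  qed (simp add: k_def)
  then have "(\<integral>\<^sup>+u. ennreal (if 0 < u then u powr (-q-1) * (1 - (lam / (lam + u powr \<alpha>)) powr t)
        else 0) \<partial>lborel)
      = (\<integral>\<^sup>+u. \<integral>\<^sup>+s. k u s \<partial>lborel \<partial>lborel)"
    by simp
  also have "\<dots> = (\<integral>\<^sup>+s. \<integral>\<^sup>+u. k u s \<partial>lborel \<partial>lborel)"
    by (rule lborel_pair.Fubini'[symmetric]) measurable
  also have "\<dots> = (\<integral>\<^sup>+s. ennreal (Gamma (1 - p) / (q * lam powr p * Gamma t)) *
      ennreal (if 0 < s then s powr ((t + p) - 1) * exp (-(1 * s)) else 0) \<partial>lborel)"
  proof (intro nn_integral_cong)
    fix s :: real
    show "(\<integral>\<^sup>+u. k u s \<partial>lborel) = ennreal (Gamma (1 - p) / (q * lam powr p * Gamma t)) *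
        ennreal (if 0 < s then s powr ((t + p) - 1) * exp (-(1 * s)) else 0)"
    proof (cases "0 < s")
      case True
      have "(\<integral>\<^sup>+u. k u s \<partial>lborel) = (\<integral>\<^sup>+u. ennreal (s powr (t-1) * exp (-s) / Gamma t) *
          ennreal (if 0 < u then u powr (-q-1) * (1 - exp (-(s / lam * u powr \<alpha>))) else 0) \<partial>lborel)"
        using True \<Gamma>t lam by (intro nn_integral_cong) (simp add: k_def ennreal_mult'[symmetric] mult_ac)
      also have "\<dots> = ennreal (s powr (t-1) * exp (-s) / Gamma t) *
          ennreal ((s / lam) powr p * Gamma (1 - p) / q)"
        using True lam q by (simp add: nn_integral_cmult nn_integral_powr_one_minus_exp_powr p_def)
      also have "\<dots> = ennreal (s powr (t-1) * exp (-s) / Gamma t * ((s / lam) powr p * Gamma (1 - p) / q))"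
        using \<Gamma>t by (intro ennreal_mult'[symmetric]) simp
      also have "s powr (t-1) * exp (-s) / Gamma t * ((s / lam) powr p * Gamma (1 - p) / q)
          = Gamma (1 - p) / (q * lam powr p * Gamma t) * (s powr ((t + p) - 1) * exp (-(1 * s)))"
        using True lam by (simp add: powr_divide powr_add powr_diff field_simps)
      finally show ?thesis using True \<Gamma>t lam p q by (simp add: ennreal_mult'[symmetric])
    qed (simp add: k_def)
  qed
  also have "\<dots> = ennreal (Gamma (1 - p) / (q * lam powr p * Gamma t)) * ennreal (Gamma (t + p))"
    using t p by (simp add: nn_integral_cmult nn_integral_powr_exp_eq_Gamma)
  also have "\<dots> = ennreal (t * Beta (1 - p) (t + p) / (q * lam powr p))"
  proof -
    have "t \<notin> \<int>\<^sub>\<le>\<^sub>0" using t by (auto elim!: nonpos_Ints_cases)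
    then have "Gamma (1 - p) / (q * lam powr p * Gamma t) * Gamma (t + p) = t * Beta (1 - p) (t + p) / (q * lam powr p)"
      using \<Gamma>t Gamma_plus1[of t] by (simp add: Beta_def field_simps)
    then show ?thesis using p q \<Gamma>t by (simp add: ennreal_mult'[symmetric])
  qed
  finally show ?thesis by (simp add: p_def)
qed

lemma (in prob_space) AE_nonneg_if_laplace_le_1:
  assumes [measurable]: "Y \<in> borel_measurable M"
    and laplace: "\<And>u. 0 \<le> u \<Longrightarrow> (\<integral>\<^sup>+\<omega>. ennreal (exp (- u * Y \<omega>)) \<partial>M) \<le> 1"
  shows "AE \<omega> in M. 0 \<le> Y \<omega>"
proof -
  \<comment> \<open>If \<open>p = P(Y \<le> -e) > 0\<close>, then \<open>u = 1/(e p)\<close> gives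
    \<open>1 \<ge> E exp(-u Y) \<ge> p exp(u e) \<ge> p (1 + u e) = p + 1\<close>.\<close>
  have null: "prob {\<omega> \<in> space M. Y \<omega> \<le> -e} = 0" if e: "0 < e" for e
  proof (rule ccontr)
    define A where "A = {\<omega> \<in> space M. Y \<omega> \<le> -e}"
    assume "prob {\<omega> \<in> space M. Y \<omega> \<le> -e} \<noteq> 0"
    then have p: "0 < prob A" unfolding A_def by (simp add: zero_less_measure_iff)
    define u where "u = 1 / (e * prob A)"
    have u: "0 \<le> u" using e p by (simp add: u_def)
    have "A \<in> sets M" unfolding A_def by measurable
    then have "ennreal (exp (u * e) * prob A) = (\<integral>\<^sup>+\<omega>. ennreal (exp (u * e)) * indicator A \<omega> \<partial>M)"
      by (simp add: nn_integral_cmult_indicator emeasure_eq_measure ennreal_mult')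
    also have "\<dots> \<le> (\<integral>\<^sup>+\<omega>. ennreal (exp (- u * Y \<omega>)) \<partial>M)"
    proof (intro nn_integral_mono)
      fix \<omega>
      show "ennreal (exp (u * e)) * indicator A \<omega> \<le> ennreal (exp (- u * Y \<omega>))"
      proof (cases "\<omega> \<in> A")
        case True
        then have "u * e \<le> - u * Y \<omega>" using mult_left_mono[of "Y \<omega>" "-e" u] u by (simp add: A_def)
        then show ?thesis using True by simp
      qed simp
    qed
    also have "\<dots> \<le> 1" using laplace[OF u] .
    finally have "exp (u * e) * prob A \<le> 1" by simp
    moreover have "prob A + 1 = prob A * (1 + u * e)" using p e by (simp add: u_def field_simps)
    moreover have "prob A * (1 + u * e) \<le> exp (u * e) * prob A"
      using p by (simp add: mult.commute)
    ultimately show False using p by linarith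
  qed
  have "AE \<omega> in M. - inverse (real (Suc n)) < Y \<omega>" for n
    using null[of "inverse (real (Suc n))"]
    by (subst AE_iff_measurable[OF _ refl]) (auto simp: emeasure_eq_measure not_less)
  then have "AE \<omega> in M. \<forall>n. - inverse (real (Suc n)) < Y \<omega>" by (simp add: AE_all_countable)
  then show ?thesis
  proof eventually_elim
    case (elim \<omega>)
    show ?case
    proof (rule ccontr)
      assume "\<not> 0 \<le> Y \<omega>"
      then obtain n where "inverse (real (Suc n)) < - Y \<omega>" using reals_Archimedean[of "- Y \<omega>"] by auto
      with elim[rule_format, of n] show False by linarith
    qed
  qed
qed

lemma (in prob_space) nn_integral_powr_eq_laplace_integral:
  fixes q :: real
  assumes [measurable]: "Y \<in> borel_measurable M" and nonneg: "AE \<omega> in M. 0 \<le> Y \<omega>"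
    and q: "0 < q" "q < 1"
  shows "(\<integral>\<^sup>+\<omega>. ennreal (Y \<omega> powr q) \<partial>M) = ennreal (q / Gamma (1 - q)) *
    (\<integral>\<^sup>+u. ennreal (if 0 < u then u powr (-q-1) * (1 - expectation (\<lambda>\<omega>. exp (- u * Y \<omega>)))
      else 0) \<partial>lborel)"
proof -
  interpret pair_sigma_finite M lborel ..
  have \<Gamma>: "0 < Gamma (1 - q)" using q by simp
  define k where "k \<omega> u = ennreal (if 0 < u then u powr (-q-1) * (1 - exp (- u * Y \<omega>)) else 0)"
    for \<omega> u
  have [measurable]: "case_prod k \<in> borel_measurable (M \<Otimes>\<^sub>M lborel)"
    unfolding k_def by measurable
  have one_minus_laplace: "(\<integral>\<^sup>+\<omega>. ennreal (1 - exp (- u * Y \<omega>)) \<partial>M)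
      = ennreal (1 - expectation (\<lambda>\<omega>. exp (- u * Y \<omega>)))" if u: "0 \<le> u" for u
  proof -
    have bounded: "AE \<omega> in M. 0 \<le> 1 - exp (- u * Y \<omega>) \<and> norm (exp (- u * Y \<omega>)) \<le> 1"
      using nonneg by eventually_elim (use u in simp)
    then have "integrable M (\<lambda>\<omega>. exp (- u * Y \<omega>))"
      by (intro integrable_const_bound[where B=1]) auto
    then show ?thesis using bounded
      by (subst nn_integral_eq_integral) (auto simp: prob_space)
  qed
  have "(\<integral>\<^sup>+\<omega>. ennreal (Y \<omega> powr q) \<partial>M) =
      (\<integral>\<^sup>+\<omega>. ennreal (q / Gamma (1 - q)) * (\<integral>\<^sup>+u. k \<omega> u \<partial>lborel) \<partial>M)"
  proof (rule nn_integral_cong_AE)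
    show "AE \<omega> in M. ennreal (Y \<omega> powr q) = ennreal (q / Gamma (1 - q)) * (\<integral>\<^sup>+u. k \<omega> u \<partial>lborel)"
      using nonneg proof eventually_elim
      case (elim \<omega>)
      have "(\<integral>\<^sup>+u. k \<omega> u \<partial>lborel) = ennreal (Gamma (1 - q) * Y \<omega> powr q / q)"
        unfolding k_def by (rule nn_integral_powr_one_minus_exp[OF q elim])
      then show ?case using q \<Gamma> by (simp add: ennreal_mult'[symmetric] less_imp_neq[symmetric])
    qed
  qed
  also have "\<dots> = ennreal (q / Gamma (1 - q)) * (\<integral>\<^sup>+u. \<integral>\<^sup>+\<omega>. k \<omega> u \<partial>M \<partial>lborel)"
    by (simp add: nn_integral_cmult Fubini')
  also have "(\<integral>\<^sup>+u. \<integral>\<^sup>+\<omega>. k \<omega> u \<partial>M \<partial>lborel) =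
      (\<integral>\<^sup>+u. ennreal (if 0 < u then u powr (-q-1) * (1 - expectation (\<lambda>\<omega>. exp (- u * Y \<omega>)))
        else 0) \<partial>lborel)"
  proof (intro nn_integral_cong)
    fix u :: real
    show "(\<integral>\<^sup>+\<omega>. k \<omega> u \<partial>M) =
        ennreal (if 0 < u then u powr (-q-1) * (1 - expectation (\<lambda>\<omega>. exp (- u * Y \<omega>))) else 0)"
    proof (cases "0 < u")
      case True
      have "(\<integral>\<^sup>+\<omega>. k \<omega> u \<partial>M) =
          (\<integral>\<^sup>+\<omega>. ennreal (u powr (-q-1)) * ennreal (1 - exp (- u * Y \<omega>)) \<partial>M)"
        using True by (intro nn_integral_cong) (simp add: k_def ennreal_mult')
      then show ?thesis
        using True one_minus_laplace[of u] by (simp add: nn_integral_cmult ennreal_mult')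
    qed (simp add: k_def)
  qed
  finally show ?thesis .
qed

lemma (in prob_space) has_bochner_integral_powr_ratio_laplace:
  fixes Y :: "'a \<Rightarrow> real" and \<alpha> lam t q :: real
  assumes [measurable]: "Y \<in> borel_measurable M"
    and laplace: "\<And>u. 0 \<le> u \<Longrightarrow>
      expectation (\<lambda>\<omega>. exp (- u * Y \<omega>)) = (lam / (lam + u powr \<alpha>)) powr t"
    and lam: "0 < lam" and t: "0 < t" and q: "0 < q" "q < \<alpha>" "q < 1"
  shows "has_bochner_integral M (\<lambda>\<omega>. Y \<omega> powr q)
    (t / (lam powr (q / \<alpha>) * Gamma (1 - q)) * Beta (1 - q / \<alpha>) (t + q / \<alpha>))"
proof -
  have "AE \<omega> in M. 0 \<le> Y \<omega>"
  proof (rule AE_nonneg_if_laplace_le_1)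
    fix u :: real
    assume u: "0 \<le> u"
    define r where "r = lam / (lam + u powr \<alpha>)"
    have "0 < lam + u powr \<alpha>" using lam by (simp add: add_pos_nonneg)
    then have "0 < r" "r \<le> 1" using lam by (simp_all add: r_def)
    then have pos: "0 < expectation (\<lambda>\<omega>. exp (- u * Y \<omega>))"
      and le1: "expectation (\<lambda>\<omega>. exp (- u * Y \<omega>)) \<le> 1"
      using laplace[OF u, folded r_def] t by (auto intro!: powr_le1)
    \<comment> \<open>A non-integrable function has expectation 0.\<close>
    from pos have "integrable M (\<lambda>\<omega>. exp (- u * Y \<omega>))"
      using not_integrable_integral_eq by force
    then show "(\<integral>\<^sup>+\<omega>. ennreal (exp (- u * Y \<omega>)) \<partial>M) \<le> 1"
      using le1 by (simp add: nn_integral_eq_integral)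
  qed simp
  then have "(\<integral>\<^sup>+\<omega>. ennreal (Y \<omega> powr q) \<partial>M) = ennreal (q / Gamma (1 - q)) *
      (\<integral>\<^sup>+u. ennreal (if 0 < u then u powr (-q-1) * (1 - expectation (\<lambda>\<omega>. exp (- u * Y \<omega>)))
        else 0) \<partial>lborel)"
    using q by (intro nn_integral_powr_eq_laplace_integral) auto
  also have "(\<integral>\<^sup>+u. ennreal (if 0 < u then u powr (-q-1) * (1 - expectation (\<lambda>\<omega>. exp (- u * Y \<omega>)))
        else 0) \<partial>lborel)
      = (\<integral>\<^sup>+u. ennreal (if 0 < u then u powr (-q-1) * (1 - (lam / (lam + u powr \<alpha>)) powr t)
        else 0) \<partial>lborel)"
    using laplace by (intro nn_integral_cong) simp
  also have "\<dots> = ennreal (t * Beta (1 - q/\<alpha>) (t + q/\<alpha>) / (q * lam powr (q/\<alpha>)))"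
    using lam t q(1,2) by (rule nn_integral_powr_one_minus_ratio_powr)
  also have "ennreal (q / Gamma (1 - q)) * \<dots> =
      ennreal (t / (lam powr (q / \<alpha>) * Gamma (1 - q)) * Beta (1 - q / \<alpha>) (t + q / \<alpha>))"
    using q by (simp add: ennreal_mult'[symmetric] less_imp_neq[symmetric] mult.commute)
  finally have "(\<integral>\<^sup>+\<omega>. ennreal (Y \<omega> powr q) \<partial>M) =
      ennreal (t / (lam powr (q / \<alpha>) * Gamma (1 - q)) * Beta (1 - q / \<alpha>) (t + q / \<alpha>))" .
  moreover have "0 < t / (lam powr (q / \<alpha>) * Gamma (1 - q)) * Beta (1 - q / \<alpha>) (t + q / \<alpha>)"
    unfolding Beta_def using lam t q
    by (intro mult_pos_pos divide_pos_pos Gamma_real_pos add_pos_pos) simp_all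
  ultimately show ?thesis
    by (intro has_bochner_integral_nn_integral) auto
qed

theorem mainTheorem5:
  fixes M :: "'a measure" and X :: "real \<Rightarrow> 'a \<Rightarrow> real"
    and \<alpha> lam t q :: real
  assumes "0 < \<alpha>" "\<alpha> < 1" "0 < lam"
    and "levy_process M X"
    and "\<And>s u. s \<ge> 0 \<Longrightarrow> u \<ge> 0 \<Longrightarrow>
           prob_space.expectation M (\<lambda>\<omega>. exp (- u * X s \<omega>)) = (lam / (lam + u powr \<alpha>)) powr s"
    and "0 < t" "0 < q" "q < \<alpha>"
  shows "integrable M (\<lambda>\<omega>. X t \<omega> powr q) \<and>
         prob_space.expectation M (\<lambda>\<omega>. X t \<omega> powr q) =
           t / (lam powr (q / \<alpha>) * Gamma (1 - q)) * Beta (1 - q / \<alpha>) (t + q / \<alpha>)"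
proof -
  interpret prob_space M using assms(4) unfolding levy_process_def by blast
  have "X t \<in> borel_measurable M" using assms(4,6) unfolding levy_process_def by auto
  then have "has_bochner_integral M (\<lambda>\<omega>. X t \<omega> powr q)
      (t / (lam powr (q / \<alpha>) * Gamma (1 - q)) * Beta (1 - q / \<alpha>) (t + q / \<alpha>))"
    using assms by (intro has_bochner_integral_powr_ratio_laplace) auto
  then show ?thesis by (simp add: has_bochner_integral_iff)
qed

end
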